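(* Let $X$ be a real Hilbert space, $f:X\to\mathbb{R}\cup\{+\infty\}$ a proper $\Phi_{lsc}$-convex function and $\bar x\in\mathrm{dom}(f)$. Then $\partial_{lsc}f(\bar x)\neq\emptyset$ if and only if $\partial_P f(\bar x)\ne\emptyset$.
   Context: $\Phi_{lsc}$ is the class of functions $\varphi(x)=-a\|x\|^2+\langle v,x\rangle+c$ ($a\ge0$, $v\in X^*$, $c\in\mathbb{R}$); $f$ is $\Phi_{lsc}$-convex if it is the pointwise supremum of the $\varphi\in\Phi_{lsc}$ with $\varphi\le f$; proper means at least one such $\varphi$ exists and $\mathrm{dom}(f)=\{x:f(x)<+\infty\}\ne\emptyset$. $\partial_{lsc}f(\bar x)$ is the set of $(a,v)\in\mathbb{R}_+\times X^*$ with $f(x)-f(\bar x)\ge\langle v,x-\bar x\rangle-a\|x\|^2+a\|\bar x\|^2$ for all $x\in X$. The proximal subdifferential $\partial_Pf(\bar x)$ is the set of $v\in X^*$ for which there exist $\delta>0$ and $\rho\ge0$ with $f(x)\ge f(\bar x)+\langle v,x-\bar x\rangle-\tfrac12\rho\|x-\bar x\|^2$ for all $x$ with $\|x-\bar x\|<\delta$. *)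

theory Defs
  imports "HOL-Analysis.Analysis"
begin

text \<open>Functions of the class Phi_lsc: x \<mapsto> -a\<parallel>x\<parallel>^2 + \<langle>v,x\<rangle> + c.
  In a real Hilbert space the dual X* is identified with X via the inner product (Riesz).\<close>
definition phi_lsc :: "real \<Rightarrow> 'a::real_inner \<Rightarrow> real \<Rightarrow> 'a \<Rightarrow> real" where
  "phi_lsc a v c x = - a * (norm x)^2 + inner v x + c"

definition lsc_minorants :: "('a::real_inner \<Rightarrow> ereal) \<Rightarrow> (real \<times> 'a \<times> real) set" where
  "lsc_minorants f = {(a, v, c). a \<ge> 0 \<and> (\<forall>y. ereal (phi_lsc a v c y) \<le> f y)}"

definition phi_lsc_convex :: "('a::real_inner \<Rightarrow> ereal) \<Rightarrow> bool" where
  "phi_lsc_convex f \<longleftrightarrow>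
     (\<forall>x. f x = (SUP p\<in>lsc_minorants f. ereal (phi_lsc (fst p) (fst (snd p)) (snd (snd p)) x)))"

definition dom_f :: "('a \<Rightarrow> ereal) \<Rightarrow> 'a set" where
  "dom_f f = {x. f x < \<infinity>}"

definition proper_lsc :: "('a::real_inner \<Rightarrow> ereal) \<Rightarrow> bool" where
  "proper_lsc f \<longleftrightarrow> lsc_minorants f \<noteq> {} \<and> dom_f f \<noteq> {}"

definition subdiff_lsc :: "('a::real_inner \<Rightarrow> ereal) \<Rightarrow> 'a \<Rightarrow> (real \<times> 'a) set" where
  "subdiff_lsc f xb = {(a, v). a \<ge> 0 \<and>
     (\<forall>x. f x \<ge> f xb + ereal (inner v (x - xb) - a * (norm x)^2 + a * (norm xb)^2))}"

definition subdiff_prox :: "('a::real_inner \<Rightarrow> ereal) \<Rightarrow> 'a \<Rightarrow> 'a set" where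
  "subdiff_prox f xb = {v. \<exists>\<delta>>0. \<exists>\<rho>\<ge>0. \<forall>x. norm (x - xb) < \<delta> \<longrightarrow>
      f x \<ge> f xb + ereal (inner v (x - xb) - (1/2) * \<rho> * (norm (x - xb))^2)}"

end

theory Submission
  imports Defs
begin

text \<open>Expanding \<open>\<parallel>x - x\<^sub>0\<parallel>\<^sup>2\<close> shows that a lower bound by a member of \<open>\<Phi>\<^sub>l\<^sub>s\<^sub>c\<close> touching
  \<open>f\<close> at \<open>x\<^sub>0\<close> is the same as a global proximal inequality, with the slope shifted
  by \<open>2a x\<^sub>0\<close>. So \<open>\<partial>\<^sub>l\<^sub>s\<^sub>c f(x\<^sub>0) \<noteq> {}\<close> gives a proximal subgradient at once. Conversely
  a proximal inequality holds only on a ball of radius \<open>\<delta>\<close>; outside the ball \<open>f\<close> is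
  bounded below by a \<open>\<Phi>\<^sub>l\<^sub>s\<^sub>c\<close>-minorant, which decreases at most quadratically in
  \<open>\<parallel>x - x\<^sub>0\<parallel>\<close>, so a large enough curvature \<open>a\<close> makes the proximal inequality global.\<close>

lemma inner_diff_sub_norm_sq_shift:
  fixes x x0 v :: "'a::real_inner" and a :: real
  shows "inner v (x - x0) - a * (norm x)^2 + a * (norm x0)^2
       = inner (v - (2 * a) *\<^sub>R x0) (x - x0) - a * (norm (x - x0))^2"
  by (simp add: power2_norm_eq_inner inner_diff_left inner_diff_right inner_commute algebra_simps)

lemma subdiff_lsc_imp_subdiff_prox:
  assumes "(a, v) \<in> subdiff_lsc f x0"
  shows "v - (2 * a) *\<^sub>R x0 \<in> subdiff_prox f x0"
proof -
  have "a \<ge> 0" and ineq: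
    "\<And>x. f x \<ge> f x0 + ereal (inner v (x - x0) - a * (norm x)^2 + a * (norm x0)^2)"
    using assms unfolding subdiff_lsc_def by auto
  have global: "\<forall>x. norm (x - x0) < 1 \<longrightarrow> f x \<ge> f x0 + ereal (inner (v - (2 * a) *\<^sub>R x0) (x - x0)
           - (1/2) * (2 * a) * (norm (x - x0))^2)"
    using ineq by (simp add: inner_diff_sub_norm_sq_shift)
  show ?thesis
    unfolding subdiff_prox_def mem_Collect_eq
  proof (rule exI[of _ "1::real"], rule conjI)
    show "\<exists>\<rho>\<ge>0. \<forall>x. norm (x - x0) < 1 \<longrightarrow> f x \<ge> f x0
        + ereal (inner (v - (2 * a) *\<^sub>R x0) (x - x0) - (1/2) * \<rho> * (norm (x - x0))^2)"
      by (rule exI[of _ "2 * a"]) (use \<open>a \<ge> 0\<close> global in simp)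
  qed simp
qed

lemma phi_lsc_ge_quadratic_in_dist:
  fixes x x0 v :: "'a::real_inner"
  assumes "a \<ge> 0"
  shows "phi_lsc a v c x \<ge> c - 2 * a * (norm x0)^2 - norm v * norm x0
           - 2 * a * (norm (x - x0))^2 - norm v * norm (x - x0)"
proof -
  define t where "t = norm (x - x0)"
  have nx: "norm x \<le> norm x0 + t"
    using norm_triangle_ineq[of x0 "x - x0"] by (simp add: t_def)
  have "(norm x)^2 \<le> (norm x0 + t)^2"
    using nx by (simp add: power_mono)
  also have "\<dots> \<le> 2 * (norm x0)^2 + 2 * t^2"
    by (smt (verit) power2_diff power2_sum zero_le_power2)
  finally have "a * (norm x)^2 \<le> a * (2 * (norm x0)^2 + 2 * t^2)"
    using assms by (simp add: mult_left_mono)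
  moreover have "inner v x \<ge> - (norm v * (norm x0 + t))"
  proof -
    have "\<bar>inner v x\<bar> \<le> norm v * (norm x0 + t)"
      using Cauchy_Schwarz_ineq2[of v x] nx
      by (meson mult_left_mono norm_ge_zero order_trans)
    then show ?thesis by linarith
  qed
  ultimately show ?thesis
    unfolding phi_lsc_def t_def[symmetric] by (simp add: algebra_simps)
qed

lemma quadratic_ge_affine_outside_ball:
  fixes t d B K :: real
  assumes "0 < d" "d \<le> t" "0 \<le> B"
  shows "(B / d + \<bar>K\<bar> / d^2) * t^2 \<ge> B * t + K"
proof -
  define s where "s = t / d"
  have s1: "s \<ge> 1" and t: "t = s * d"
    using assms by (simp_all add: s_def)
  have "B * t \<ge> 0"
    using assms by simp
  then have "B * t \<le> B * t * s"
    using s1 by (simp add: mult_le_cancel_left1)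
  also have "\<dots> = B / d * t^2"
    using assms by (simp add: t power2_eq_square)
  finally have linear: "B * t \<le> B / d * t^2" .
  have "K \<le> \<bar>K\<bar> * s^2"
    using s1 by (smt (verit) mult_le_cancel_left1 one_le_power)
  also have "\<dots> = \<bar>K\<bar> / d^2 * t^2"
    using assms by (simp add: t power2_eq_square)
  finally show ?thesis
    using linear by (simp add: algebra_simps)
qed

lemma prox_inequality_globalizes:
  fixes f :: "'a::real_inner \<Rightarrow> ereal"
  assumes "(a0, v0, c0) \<in> lsc_minorants f" and "f x0 = ereal F"
    and "\<delta> > 0" and "\<rho> \<ge> 0"
    and local: "\<And>x. norm (x - x0) < \<delta> \<Longrightarrow>
      f x \<ge> f x0 + ereal (inner v (x - x0) - (1/2) * \<rho> * (norm (x - x0))^2)"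
  obtains a where "a \<ge> 0" and "\<And>x. f x \<ge> ereal (F + inner v (x - x0) - a * (norm (x - x0))^2)"
proof
  have a0: "a0 \<ge> 0" and minorant: "\<And>y. ereal (phi_lsc a0 v0 c0 y) \<le> f y"
    using assms(1) unfolding lsc_minorants_def by auto
  define B where "B = norm v0 + norm v"
  define K where "K = F + 2 * a0 * (norm x0)^2 + norm v0 * norm x0 - c0"
  define a where "a = \<rho>/2 + 2 * a0 + B/\<delta> + \<bar>K\<bar>/\<delta>^2"
  have "B \<ge> 0" by (simp add: B_def)
  then have a_ge: "a \<ge> \<rho>/2"
    using a0 \<open>\<delta> > 0\<close> by (simp add: a_def)
  then show "a \<ge> 0"
    using \<open>\<rho> \<ge> 0\<close> by linarith
  fix x
  define t where "t = norm (x - x0)"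
  show "f x \<ge> ereal (F + inner v (x - x0) - a * t^2)"
  proof (cases "t < \<delta>")
    case True
    have "(1/2) * \<rho> * t^2 \<le> a * t^2"
      using mult_right_mono[OF a_ge, of "t^2"] by simp
    then have "ereal (F + inner v (x - x0) - a * t^2)
        \<le> f x0 + ereal (inner v (x - x0) - (1/2) * \<rho> * t^2)"
      using assms(2) by simp
    also have "\<dots> \<le> f x"
      using local True by (simp add: t_def)
    finally show ?thesis .
  next
    case False
    have "(B/\<delta> + \<bar>K\<bar>/\<delta>^2) * t^2 \<ge> B * t + K"
      using quadratic_ge_affine_outside_ball \<open>\<delta> > 0\<close> False \<open>B \<ge> 0\<close> by simp
    moreover have "\<rho>/2 * t^2 \<ge> 0"
      using \<open>\<rho> \<ge> 0\<close> by simp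
    ultimately have curvature: "a * t^2 \<ge> 2 * a0 * t^2 + B * t + K"
      unfolding a_def by (simp add: algebra_simps)
    have "inner v (x - x0) \<le> norm v * t"
      using Cauchy_Schwarz_ineq2[of v "x - x0"] by (simp add: t_def)
    moreover have "phi_lsc a0 v0 c0 x \<ge> c0 - 2 * a0 * (norm x0)^2 - norm v0 * norm x0
        - 2 * a0 * t^2 - norm v0 * t"
      using phi_lsc_ge_quadratic_in_dist[OF a0] by (simp add: t_def)
    ultimately have "F + inner v (x - x0) - a * t^2 \<le> phi_lsc a0 v0 c0 x"
      using curvature unfolding B_def K_def by (simp add: algebra_simps)
    then show ?thesis
      using minorant[of x] order_trans ereal_less_eq(3) by blast
  qed
qed

lemma proper_lsc_finite_on_dom:
  assumes "proper_lsc f" and "x \<in> dom_f f"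
  obtains F where "f x = ereal F"
proof -
  obtain a v c where "(a, v, c) \<in> lsc_minorants f"
    using assms(1) unfolding proper_lsc_def by auto
  then have "f x \<noteq> -\<infinity>"
    unfolding lsc_minorants_def by (metis (no_types, lifting) MInfty_neq_ereal(1)
        case_prodD ereal_infty_less_eq(2) mem_Collect_eq)
  moreover have "f x \<noteq> \<infinity>"
    using assms(2) by (simp add: dom_f_def)
  ultimately show thesis
    using that by (cases "f x") auto
qed

lemma subdiff_prox_imp_subdiff_lsc:
  assumes "proper_lsc f" and "x0 \<in> dom_f f" and "v \<in> subdiff_prox f x0"
  obtains a where "(a, v + (2 * a) *\<^sub>R x0) \<in> subdiff_lsc f x0"
proof -
  obtain F where F: "f x0 = ereal F"
    using proper_lsc_finite_on_dom assms(1,2) by blast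
  obtain a0 v0 c0 where minorant: "(a0, v0, c0) \<in> lsc_minorants f"
    using assms(1) unfolding proper_lsc_def by auto
  obtain \<delta> \<rho> where "\<delta> > 0" "\<rho> \<ge> 0" and "\<And>x. norm (x - x0) < \<delta> \<Longrightarrow>
      f x \<ge> f x0 + ereal (inner v (x - x0) - (1/2) * \<rho> * (norm (x - x0))^2)"
    using assms(3) unfolding subdiff_prox_def by auto
  then obtain a where "a \<ge> 0"
    and global: "\<And>x. f x \<ge> ereal (F + inner v (x - x0) - a * (norm (x - x0))^2)"
    using prox_inequality_globalizes[OF minorant F] by metis
  have "(a, v + (2 * a) *\<^sub>R x0) \<in> subdiff_lsc f x0"
    unfolding subdiff_lsc_def
    using \<open>a \<ge> 0\<close> global F by (simp add: inner_diff_sub_norm_sq_shift add_diff_eq)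
  then show thesis by (rule that)
qed

theorem mainTheorem8:
  fixes f :: "'a::{real_inner, complete_space} \<Rightarrow> ereal" and xb :: 'a
  assumes "proper_lsc f" and "phi_lsc_convex f" and "xb \<in> dom_f f"
  shows "subdiff_lsc f xb \<noteq> {} \<longleftrightarrow> subdiff_prox f xb \<noteq> {}"
proof
  assume "subdiff_lsc f xb \<noteq> {}"
  then obtain a v where "(a, v) \<in> subdiff_lsc f xb" by auto
  then show "subdiff_prox f xb \<noteq> {}"
    using subdiff_lsc_imp_subdiff_prox by blast
next
  assume "subdiff_prox f xb \<noteq> {}"
  then obtain v where "v \<in> subdiff_prox f xb" by auto
  then show "subdiff_lsc f xb \<noteq> {}"
    using subdiff_prox_imp_subdiff_lsc assms(1,3) by (metis empty_iff)
qed

end
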